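(* Let $A$ be a unital C*-algebra and let $pMO(A)$ be the locale presented by the site $\mathcal{C}(A)\ltimes\Sigma$ described in the context. Then the points of $pMO(A)$ are in one-to-one correspondence with the consistent ideals of partial measurement outcomes of $A$. Explicitly: a point $\tau$ (completely prime filter) corresponds to the family indexed by $I_\tau=\{C\in\mathcal{C}(A) : (C,\Sigma(C))\in\tau\}$, where for $C\in I_\tau$ the character $\sigma_C\in\Sigma(C)$ is the unique character with $\{u : (C,u)\in\tau\}=\{u\in\mathcal{O}(\Sigma(C)) : \sigma_C\in u\}$; conversely, a consistent ideal $(C_i,\sigma_i)_{i}$ corresponds to the point $\{(C_i,u) : \sigma_i\in u\}$.
   Context: Work classically in Sets. $A$ is a unital C*-algebra; $\mathcal{C}(A)$ denotes the set of commutative unital C*-subalgebras of $A$, partially ordered by inclusion. For $C\in\mathcal{C}(A)$, $\Sigma(C)$ is its Gelfand spectrum (the compact Hausdorff space of characters of $C$) and $\mathcal{O}(\Sigma(C))$ its lattice of open sets. For $C\subseteq D$ in $\mathcal{C}(A)$, $r_{D,C}:\Sigma(D)\to\Sigma(C)$ is restriction of characters (continuous). The site $\mathcal{C}(A)\ltimes\Sigma$: objects are pairs $(C,u)$ with $C\in\mathcal{C}(A)$, $u\in\mathcal{O}(\Sigma(C))$; order $(D,v)\le(C,u)$ iff $C\subseteq D$ and $v\subseteq r_{D,C}^{-1}(u)$; covering relation $(C,u)\lhd\{(D_i,v_i)\}_{i\in I}$ iff $C\subseteq D_i$ for all $i$ and $u\subseteq\bigcup\{v_i : i\in I, D_i=C\}$.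 The locale presented by such a site has as frame the down-closed subsets $U$ of the poset such that $x\lhd S\subseteq U$ implies $x\in U$. A point of it is a completely prime filter: an inhabited, up-closed subset $\tau$ such that any two elements of $\tau$ have a common lower bound in $\tau$, and whenever $x\in\tau$ and $x\lhd S$ then $S\cap\tau\neq\emptyset$. A partial measurement outcome is a pair $(C,\sigma)$ with $C\in\mathcal{C}(A)$ and $\sigma\in\Sigma(C)$. A consistent ideal of partial measurement outcomes is a family $(C_i,\sigma_i)_{i}$ of partial measurement outcomes such that $\{C_i\}$ is an ideal of $\mathcal{C}(A)$ (nonempty, down-closed, and directed under inclusion), each $C_i$ occurs with exactly one $\sigma_i$, and $C_i\subseteq C_j$ implies $\sigma_i=\sigma_j|_{C_i}$. *)

theory Defs
  imports "HOL-Analysis.Analysis"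
begin

text \<open>A unital C*-algebra: the type 'a carries a (real) Banach algebra structure with unit,
  together with an explicit complex scalar multiplication smc and an involution star.\<close>

definition cstar_alg ::
  "(complex \<Rightarrow> 'a::{real_normed_algebra,ring_1,banach} \<Rightarrow> 'a) \<Rightarrow> ('a \<Rightarrow> 'a) \<Rightarrow> bool" where
  "cstar_alg smc star \<longleftrightarrow>
     (\<forall>c x y. smc c (x + y) = smc c x + smc c y) \<and>
     (\<forall>c d x. smc (c + d) x = smc c x + smc d x) \<and>
     (\<forall>c d x. smc (c * d) x = smc c (smc d x)) \<and>
     (\<forall>r x. smc (complex_of_real r) x = scaleR r x) \<and>
     (\<forall>c x y. smc c (x * y) = smc c x * y \<and> smc c (x * y) = x * smc c y) \<and>
     (\<forall>c x. norm (smc c x) = cmod c * norm x) \<and>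
     (\<forall>x y. star (x + y) = star x + star y) \<and>
     (\<forall>c x. star (smc c x) = smc (cnj c) (star x)) \<and>
     (\<forall>x y. star (x * y) = star y * star x) \<and>
     (\<forall>x. star (star x) = x) \<and>
     (\<forall>x. norm (star x * x) = (norm x)\<^sup>2)"

definition comm_subalg ::
  "(complex \<Rightarrow> 'a::{real_normed_algebra,ring_1,banach} \<Rightarrow> 'a) \<Rightarrow> ('a \<Rightarrow> 'a) \<Rightarrow> 'a set \<Rightarrow> bool" where
  "comm_subalg smc star C \<longleftrightarrow>
     1 \<in> C \<and>
     (\<forall>x\<in>C. \<forall>y\<in>C. x + y \<in> C \<and> x * y \<in> C \<and> x * y = y * x) \<and>
     (\<forall>c. \<forall>x\<in>C. smc c x \<in> C) \<and>
     (\<forall>x\<in>C. star x \<in> C) \<and>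
     closed C"

definition CA ::
  "(complex \<Rightarrow> 'a::{real_normed_algebra,ring_1,banach} \<Rightarrow> 'a) \<Rightarrow> ('a \<Rightarrow> 'a) \<Rightarrow> 'a set set" where
  "CA smc star = {C. comm_subalg smc star C}"

text \<open>Gelfand spectrum: characters (nonzero, i.e. unital, multiplicative complex-linear
  functionals) of C, represented as functions extensional on C.\<close>
definition Spec ::
  "(complex \<Rightarrow> 'a::{real_normed_algebra,ring_1,banach} \<Rightarrow> 'a) \<Rightarrow> 'a set \<Rightarrow> ('a \<Rightarrow> complex) set" where
  "Spec smc C = {\<sigma>. \<sigma> \<in> extensional C \<and> \<sigma> 1 = 1 \<and>
      (\<forall>x\<in>C. \<forall>y\<in>C. \<sigma> (x + y) = \<sigma> x + \<sigma> y \<and> \<sigma> (x * y) = \<sigma> x * \<sigma> y) \<and>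
      (\<forall>c. \<forall>x\<in>C. \<sigma> (smc c x) = c * \<sigma> x)}"

text \<open>Gelfand (weak-*) topology: pointwise convergence on C.\<close>
definition SpecTop ::
  "(complex \<Rightarrow> 'a::{real_normed_algebra,ring_1,banach} \<Rightarrow> 'a) \<Rightarrow> 'a set \<Rightarrow> ('a \<Rightarrow> complex) topology" where
  "SpecTop smc C = subtopology (product_topology (\<lambda>_. euclidean) C) (Spec smc C)"

definition restr :: "'a set \<Rightarrow> ('a \<Rightarrow> complex) \<Rightarrow> ('a \<Rightarrow> complex)" where
  "restr C \<sigma> = restrict \<sigma> C"

definition site_el ::
  "(complex \<Rightarrow> 'a::{real_normed_algebra,ring_1,banach} \<Rightarrow> 'a) \<Rightarrow> ('a \<Rightarrow> 'a)
    \<Rightarrow> ('a set \<times> ('a \<Rightarrow> complex) set) set" where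
  "site_el smc star = {(C, u). C \<in> CA smc star \<and> openin (SpecTop smc C) u}"

definition site_le ::
  "(complex \<Rightarrow> 'a::{real_normed_algebra,ring_1,banach} \<Rightarrow> 'a)
    \<Rightarrow> ('a set \<times> ('a \<Rightarrow> complex) set) \<Rightarrow> ('a set \<times> ('a \<Rightarrow> complex) set) \<Rightarrow> bool" where
  "site_le smc x y \<longleftrightarrow> (case x of (D, v) \<Rightarrow> case y of (C, u) \<Rightarrow>
      C \<subseteq> D \<and> v \<subseteq> {\<sigma> \<in> Spec smc D. restr C \<sigma> \<in> u})"

definition covers ::
  "('a set \<times> ('a \<Rightarrow> complex) set) \<Rightarrow> ('a set \<times> ('a \<Rightarrow> complex) set) set \<Rightarrow> bool" where
  "covers x S \<longleftrightarrow> (case x of (C, u) \<Rightarrow>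
      (\<forall>(D, v)\<in>S. C \<subseteq> D) \<and> u \<subseteq> \<Union>{v. (C, v) \<in> S})"

text \<open>Points of pMO(A): completely prime filters on the site.\<close>
definition is_point ::
  "(complex \<Rightarrow> 'a::{real_normed_algebra,ring_1,banach} \<Rightarrow> 'a) \<Rightarrow> ('a \<Rightarrow> 'a)
    \<Rightarrow> ('a set \<times> ('a \<Rightarrow> complex) set) set \<Rightarrow> bool" where
  "is_point smc star \<tau> \<longleftrightarrow>
     \<tau> \<subseteq> site_el smc star \<and> \<tau> \<noteq> {} \<and>
     (\<forall>x\<in>\<tau>. \<forall>y\<in>site_el smc star. site_le smc x y \<longrightarrow> y \<in> \<tau>) \<and>
     (\<forall>x\<in>\<tau>. \<forall>y\<in>\<tau>. \<exists>z\<in>\<tau>. site_le smc z x \<and> site_le smc z y) \<and>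
     (\<forall>x\<in>\<tau>. \<forall>S. S \<subseteq> site_el smc star \<and> covers x S \<longrightarrow> S \<inter> \<tau> \<noteq> {})"

text \<open>Consistent ideals of partial measurement outcomes, as sets of pairs (C, \<sigma>).\<close>
definition consistent_ideal ::
  "(complex \<Rightarrow> 'a::{real_normed_algebra,ring_1,banach} \<Rightarrow> 'a) \<Rightarrow> ('a \<Rightarrow> 'a)
    \<Rightarrow> ('a set \<times> ('a \<Rightarrow> complex)) set \<Rightarrow> bool" where
  "consistent_ideal smc star P \<longleftrightarrow>
     (\<forall>(C, \<sigma>)\<in>P. C \<in> CA smc star \<and> \<sigma> \<in> Spec smc C) \<and>
     fst ` P \<noteq> {} \<and>
     (\<forall>C\<in>fst ` P. \<forall>C'\<in>CA smc star. C' \<subseteq> C \<longrightarrow> C' \<in> fst ` P) \<and>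
     (\<forall>C\<in>fst ` P. \<forall>C'\<in>fst ` P. \<exists>D\<in>fst ` P. C \<subseteq> D \<and> C' \<subseteq> D) \<and>
     (\<forall>C \<sigma> \<sigma>'. (C, \<sigma>) \<in> P \<and> (C, \<sigma>') \<in> P \<longrightarrow> \<sigma> = \<sigma>') \<and>
     (\<forall>(C, \<sigma>)\<in>P. \<forall>(D, \<rho>)\<in>P. C \<subseteq> D \<longrightarrow> \<sigma> = restr C \<rho>)"

definition point_to_ideal ::
  "(complex \<Rightarrow> 'a::{real_normed_algebra,ring_1,banach} \<Rightarrow> 'a) \<Rightarrow> ('a \<Rightarrow> 'a)
    \<Rightarrow> ('a set \<times> ('a \<Rightarrow> complex) set) set \<Rightarrow> ('a set \<times> ('a \<Rightarrow> complex)) set" where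
  "point_to_ideal smc star \<tau> = {(C, \<sigma>). C \<in> CA smc star \<and> (C, Spec smc C) \<in> \<tau> \<and>
      \<sigma> \<in> Spec smc C \<and> {u. (C, u) \<in> \<tau>} = {u. openin (SpecTop smc C) u \<and> \<sigma> \<in> u}}"

definition ideal_to_point ::
  "(complex \<Rightarrow> 'a::{real_normed_algebra,ring_1,banach} \<Rightarrow> 'a)
    \<Rightarrow> ('a set \<times> ('a \<Rightarrow> complex)) set \<Rightarrow> ('a set \<times> ('a \<Rightarrow> complex) set) set" where
  "ideal_to_point smc P = {(C, u). \<exists>\<sigma>. (C, \<sigma>) \<in> P \<and> openin (SpecTop smc C) u \<and> \<sigma> \<in> u}"

end

theory Submission
  imports Defs
begin

(*
  The heart of the argument is a fact of general topology: in a Hausdorff space, a completely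
  prime filter of open sets is the filter of open neighbourhoods of exactly one point
  (Hausdorff spaces are sober).  For a point tau of pMO(A) and a context C with (C, Sigma(C))
  in tau, the fibre {u. (C, u) \<in> tau} is such a filter on the Gelfand spectrum Sigma(C),
  which yields the unique character sigma_C of the statement.
*)

abbreviation open_nbhds :: "'a topology \<Rightarrow> 'a \<Rightarrow> 'a set set" where
  "open_nbhds X x \<equiv> {u. openin X u \<and> x \<in> u}"

subsection \<open>Completely prime filters of opens in Hausdorff spaces\<close>

lemma t1_space_eq_by_nbhds:
  assumes "t1_space X" "x \<in> topspace X" "y \<in> topspace X"
    and "\<And>u. openin X u \<Longrightarrow> y \<in> u \<Longrightarrow> x \<in> u"
  shows "x = y"
  using assms unfolding t1_space_def by metis

text \<open>Soberness of Hausdorff spaces: a completely prime filter F of opens is the neighbourhood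
  filter of some point, namely of a point outside the union W of all opens not in F.\<close>
lemma Hausdorff_completely_prime_filter_nbhds:
  assumes X: "Hausdorff_space X"
    and opens: "\<And>u. u \<in> F \<Longrightarrow> openin X u"
    and u0: "u0 \<in> F"
    and inter: "\<And>u v. u \<in> F \<Longrightarrow> v \<in> F \<Longrightarrow> u \<inter> v \<in> F"
    and empty: "{} \<notin> F"
    and prime: "\<And>u V. u \<in> F \<Longrightarrow> (\<And>v. v \<in> V \<Longrightarrow> openin X v) \<Longrightarrow> u \<subseteq> \<Union>V \<Longrightarrow> \<exists>v\<in>V. v \<in> F"
  shows "\<exists>x. x \<in> topspace X \<and> F = open_nbhds X x"
proof -
  define W where "W = \<Union>{v. openin X v \<and> v \<notin> F}"
  have not_in_W: "\<not> u \<subseteq> W" if "u \<in> F" for u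
    using prime[OF that, of "{v. openin X v \<and> v \<notin> F}"] unfolding W_def by blast
  obtain x where x: "x \<in> u0" "x \<notin> W"
    using not_in_W[OF u0] by blast
  have x_top: "x \<in> topspace X"
    using openin_subset[OF opens[OF u0]] x(1) by blast
  have nbhd_in_F: "u \<in> F" if "openin X u" "x \<in> u" for u
    using that x(2) unfolding W_def by blast
  have F_nbhd: "x \<in> u" if u: "u \<in> F" for u
  proof (rule ccontr)
    assume "x \<notin> u"
    have "u \<subseteq> W"
    proof
      fix y assume "y \<in> u"
      then have "y \<in> topspace X"
        using openin_subset[OF opens[OF u]] by blast
      with x_top \<open>x \<notin> u\<close> \<open>y \<in> u\<close> obtain U V where
        UV: "openin X U" "openin X V" "x \<in> U" "y \<in> V" "disjnt U V"
        using X unfolding Hausdorff_space_def by metis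
      have "V \<notin> F"
      proof
        assume "V \<in> F"
        then have "U \<inter> V \<in> F"
          using inter nbhd_in_F UV(1,3) by blast
        with empty UV(5) show False
          by (simp add: disjnt_def)
      qed
      with UV(2,4) show "y \<in> W"
        unfolding W_def by blast
    qed
    with not_in_W u show False by blast
  qed
  show ?thesis
    using x_top nbhd_in_F F_nbhd opens by blast
qed

lemma Hausdorff_completely_prime_filter_unique_nbhds:
  assumes X: "Hausdorff_space X"
    and opens: "\<And>u. u \<in> F \<Longrightarrow> openin X u"
    and u0: "u0 \<in> F"
    and inter: "\<And>u v. u \<in> F \<Longrightarrow> v \<in> F \<Longrightarrow> u \<inter> v \<in> F"
    and empty: "{} \<notin> F"
    and prime: "\<And>u V. u \<in> F \<Longrightarrow> (\<And>v. v \<in> V \<Longrightarrow> openin X v) \<Longrightarrow> u \<subseteq> \<Union>V \<Longrightarrow> \<exists>v\<in>V. v \<in> F"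
  shows "\<exists>!x. x \<in> topspace X \<and> F = open_nbhds X x"
proof (rule ex_ex1I)
  show "\<exists>x. x \<in> topspace X \<and> F = open_nbhds X x"
    by (rule Hausdorff_completely_prime_filter_nbhds)
      (fact X opens u0 inter empty prime)+
next
  fix x y
  assume "x \<in> topspace X \<and> F = open_nbhds X x" "y \<in> topspace X \<and> F = open_nbhds X y"
  then show "x = y"
    using t1_space_eq_by_nbhds[OF Hausdorff_imp_t1_space[OF X]] by blast
qed

subsection \<open>Gelfand spectra\<close>

lemma topspace_SpecTop [simp]: "topspace (SpecTop smc C) = Spec smc C"
  unfolding SpecTop_def by (auto simp: Spec_def PiE_def)

lemma openin_SpecTop_Spec: "openin (SpecTop smc C) (Spec smc C)"
  using openin_topspace[of "SpecTop smc C"] by simp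

lemma Hausdorff_SpecTop: "Hausdorff_space (SpecTop smc C)"
  unfolding SpecTop_def
  by (rule Hausdorff_space_subtopology)
    (metis Hausdorff_space_euclidean Hausdorff_space_product_topology)

lemma SpecTop_eq_by_nbhds:
  assumes "\<sigma> \<in> Spec smc C" "\<rho> \<in> Spec smc C"
    and "\<And>u. openin (SpecTop smc C) u \<Longrightarrow> \<rho> \<in> u \<Longrightarrow> \<sigma> \<in> u"
  shows "\<sigma> = \<rho>"
  using assms by (intro t1_space_eq_by_nbhds[OF Hausdorff_imp_t1_space[OF Hausdorff_SpecTop]]) auto

text \<open>Characters are extensional, so restricting one to its own algebra does nothing.\<close>
lemma restr_Spec_self: "\<sigma> \<in> Spec smc C \<Longrightarrow> restr C \<sigma> = \<sigma>"
  unfolding restr_def Spec_def by (auto simp: restrict_def extensional_def)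

lemma restr_Spec:
  assumes "C \<in> CA smc star" "C \<subseteq> D" "\<sigma> \<in> Spec smc D"
  shows "restr C \<sigma> \<in> Spec smc C"
  using assms unfolding restr_def Spec_def CA_def comm_subalg_def
  by (auto simp: subset_iff)

lemma continuous_map_restr:
  assumes "C \<in> CA smc star" "C \<subseteq> D"
  shows "continuous_map (SpecTop smc D) (SpecTop smc C) (restr C)"
proof -
  have eval: "continuous_map (SpecTop smc D) euclidean (\<lambda>\<sigma>. restr C \<sigma> k)" if "k \<in> C" for k
  proof -
    have "continuous_map (SpecTop smc D) euclidean (\<lambda>\<sigma>. \<sigma> k)"
      unfolding SpecTop_def
      using \<open>k \<in> C\<close> assms(2)
      by (intro continuous_map_from_subtopology continuous_map_product_projection) auto
    then show ?thesis
      using that by (simp add: restr_def)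
  qed
  have "continuous_map (SpecTop smc D) (product_topology (\<lambda>_. euclidean) C) (restr C)"
    unfolding continuous_map_componentwise
    using eval by (auto simp: restr_def)
  then show ?thesis
    unfolding SpecTop_def[of smc C] continuous_map_in_subtopology
    using restr_Spec[OF assms] by (auto simp: SpecTop_def[of smc D])
qed

lemma openin_restr_preimage:
  assumes "C \<in> CA smc star" "C \<subseteq> D" "openin (SpecTop smc C) u"
  shows "openin (SpecTop smc D) {\<sigma> \<in> Spec smc D. restr C \<sigma> \<in> u}"
  using openin_continuous_map_preimage[OF continuous_map_restr[OF assms(1,2)] assms(3)] by simp

subsection \<open>Points of pMO(A)\<close>

lemma is_pointD:
  assumes "is_point smc star \<tau>"
  shows point_site_el: "x \<in> \<tau> \<Longrightarrow> x \<in> site_el smc star"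
    and point_nonempty: "\<tau> \<noteq> {}"
    and point_up_closed: "x \<in> \<tau> \<Longrightarrow> y \<in> site_el smc star \<Longrightarrow> site_le smc x y \<Longrightarrow> y \<in> \<tau>"
    and point_directed: "x \<in> \<tau> \<Longrightarrow> y \<in> \<tau> \<Longrightarrow> \<exists>z\<in>\<tau>. site_le smc z x \<and> site_le smc z y"
    and point_covers: "x \<in> \<tau> \<Longrightarrow> S \<subseteq> site_el smc star \<Longrightarrow> covers x S \<Longrightarrow> S \<inter> \<tau> \<noteq> {}"
  using assms unfolding is_point_def by blast+

lemma point_el:
  assumes "is_point smc star \<tau>" "(C, u) \<in> \<tau>"
  shows "C \<in> CA smc star" "openin (SpecTop smc C) u"
  using point_site_el[OF assms] unfolding site_el_def by auto

lemma point_restr_up: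
  assumes "is_point smc star \<tau>" "(D, v) \<in> \<tau>" "C \<in> CA smc star" "C \<subseteq> D"
    and "openin (SpecTop smc C) u" "v \<subseteq> {\<sigma> \<in> Spec smc D. restr C \<sigma> \<in> u}"
  shows "(C, u) \<in> \<tau>"
  using point_up_closed[OF assms(1,2)] assms(3-6) by (simp add: site_el_def site_le_def)

lemma point_top:
  assumes "is_point smc star \<tau>" "(C, u) \<in> \<tau>"
  shows "(C, Spec smc C) \<in> \<tau>"
proof -
  have "u \<subseteq> {\<sigma> \<in> Spec smc C. restr C \<sigma> \<in> Spec smc C}"
    using openin_subset[OF point_el(2)[OF assms]] restr_Spec_self by fastforce
  then show ?thesis
    using point_restr_up[OF assms point_el(1)[OF assms] order_refl openin_SpecTop_Spec] by blast
qed

text \<open>The fibre of a point over a context C is a completely prime filter of opens of Sigma(C).\<close>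
lemma point_fiber_Int:
  assumes "is_point smc star \<tau>" "(C, u) \<in> \<tau>" "(C, v) \<in> \<tau>"
  shows "(C, u \<inter> v) \<in> \<tau>"
proof -
  obtain E w where w: "(E, w) \<in> \<tau>" "site_le smc (E, w) (C, u)" "site_le smc (E, w) (C, v)"
    using point_directed[OF assms] by auto
  then have "C \<subseteq> E" "w \<subseteq> {\<sigma> \<in> Spec smc E. restr C \<sigma> \<in> u \<inter> v}"
    by (auto simp: site_le_def)
  then show ?thesis
    using point_restr_up[OF assms(1) w(1) point_el(1)[OF assms(1,2)]]
      openin_Int[OF point_el(2)[OF assms(1,2)] point_el(2)[OF assms(1,3)]] by blast
qed

text \<open>The empty family covers (C, {}), so no point contains it.\<close>
lemma point_fiber_empty:
  assumes "is_point smc star \<tau>"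
  shows "(C, {}) \<notin> \<tau>"
  using point_covers[OF assms, of "(C, {})" "{}"] by (auto simp: covers_def)

lemma point_fiber_prime:
  assumes "is_point smc star \<tau>" "(C, u) \<in> \<tau>"
    and "\<And>v. v \<in> V \<Longrightarrow> openin (SpecTop smc C) v" "u \<subseteq> \<Union>V"
  shows "\<exists>v\<in>V. (C, v) \<in> \<tau>"
proof -
  have "Pair C ` V \<subseteq> site_el smc star"
    using assms(3) point_el(1)[OF assms(1,2)] by (auto simp: site_el_def)
  moreover have "{v. (C, v) \<in> Pair C ` V} = V"
    by auto
  then have "covers (C, u) (Pair C ` V)"
    using assms(4) by (simp add: covers_def)
  ultimately show ?thesis
    using point_covers[OF assms(1,2)] by blast
qed

text \<open>Hence, by soberness of Sigma(C), the fibre is the neighbourhood filter of a unique character.\<close>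
lemma point_fiber_nbhds:
  assumes "is_point smc star \<tau>" "(C, u) \<in> \<tau>"
  shows "\<exists>!\<sigma>. \<sigma> \<in> Spec smc C \<and> {u. (C, u) \<in> \<tau>} = open_nbhds (SpecTop smc C) \<sigma>"
  using Hausdorff_completely_prime_filter_unique_nbhds[of "SpecTop smc C" "{u. (C, u) \<in> \<tau>}" u,
      OF Hausdorff_SpecTop]
    point_el(2)[OF assms(1)] assms(2) point_fiber_Int[OF assms(1)] point_fiber_empty[OF assms(1)]
    point_fiber_prime[OF assms(1)]
  by simp

subsection \<open>From points to consistent ideals\<close>

lemma Domain_point_to_ideal:
  assumes "is_point smc star \<tau>"
  shows "Domain (point_to_ideal smc star \<tau>) = {C. (C, Spec smc C) \<in> \<tau>}"
proof (intro set_eqI iffI)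
  fix C assume "C \<in> {C. (C, Spec smc C) \<in> \<tau>}"
  then have top: "(C, Spec smc C) \<in> \<tau>" by simp
  then obtain \<sigma> where "\<sigma> \<in> Spec smc C" "{u. (C, u) \<in> \<tau>} = open_nbhds (SpecTop smc C) \<sigma>"
    using ex1_implies_ex[OF point_fiber_nbhds[OF assms top]] by blast
  then have "(C, \<sigma>) \<in> point_to_ideal smc star \<tau>"
    using top point_el(1)[OF assms top] by (simp add: point_to_ideal_def)
  then show "C \<in> Domain (point_to_ideal smc star \<tau>)" by blast
qed (auto simp: point_to_ideal_def)

lemma point_to_ideal_fiber:
  assumes "(C, \<sigma>) \<in> point_to_ideal smc star \<tau>"
  shows "(C, u) \<in> \<tau> \<longleftrightarrow> openin (SpecTop smc C) u \<and> \<sigma> \<in> u"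
  using assms unfolding point_to_ideal_def by blast

text \<open>Distinct characters have distinct neighbourhood filters, so the outcome over C is unique.\<close>
lemma point_to_ideal_unique:
  assumes "(C, \<sigma>) \<in> point_to_ideal smc star \<tau>" "(C, \<sigma>') \<in> point_to_ideal smc star \<tau>"
  shows "\<sigma> = \<sigma>'"
proof (rule SpecTop_eq_by_nbhds)
  show "\<sigma> \<in> Spec smc C" "\<sigma>' \<in> Spec smc C"
    using assms by (simp_all add: point_to_ideal_def)
  fix u assume "openin (SpecTop smc C) u" "\<sigma>' \<in> u"
  then show "\<sigma> \<in> u"
    using point_to_ideal_fiber[OF assms(1)] point_to_ideal_fiber[OF assms(2)] by blast
qed

text \<open>The outcomes chosen by a point are compatible with restriction: every neighbourhood u of
  restr C rho pulls back to a neighbourhood of rho, which lies in the point, so (C, u) does too.\<close>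
lemma point_to_ideal_restr:
  assumes T: "is_point smc star \<tau>"
    and C: "(C, \<sigma>) \<in> point_to_ideal smc star \<tau>" and D: "(D, \<rho>) \<in> point_to_ideal smc star \<tau>"
    and sub: "C \<subseteq> D"
  shows "\<sigma> = restr C \<rho>"
proof -
  have CA: "C \<in> CA smc star" and \<sigma>: "\<sigma> \<in> Spec smc C" and \<rho>: "\<rho> \<in> Spec smc D"
    using C D by (auto simp: point_to_ideal_def)
  show ?thesis
  proof (rule SpecTop_eq_by_nbhds[OF \<sigma> restr_Spec[OF CA sub \<rho>]])
    fix u assume u: "openin (SpecTop smc C) u" "restr C \<rho> \<in> u"
    have "(D, {f \<in> Spec smc D. restr C f \<in> u}) \<in> \<tau>"
      using point_to_ideal_fiber[OF D] openin_restr_preimage[OF CA sub u(1)] \<rho> u(2) by simp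
    then have "(C, u) \<in> \<tau>"
      using point_restr_up[OF T _ CA sub u(1)] by blast
    then show "\<sigma> \<in> u"
      using point_to_ideal_fiber[OF C] by blast
  qed
qed

lemma point_to_ideal_consistent:
  assumes T: "is_point smc star \<tau>"
  shows "consistent_ideal smc star (point_to_ideal smc star \<tau>)"
proof -
  let ?P = "point_to_ideal smc star \<tau>"
  have dom: "fst ` ?P = {C. (C, Spec smc C) \<in> \<tau>}"
    using Domain_point_to_ideal[OF T] by (simp add: fst_eq_Domain)
  have el: "\<forall>(C, \<sigma>)\<in>?P. C \<in> CA smc star \<and> \<sigma> \<in> Spec smc C"
    by (auto simp: point_to_ideal_def)
  have ne: "fst ` ?P \<noteq> {}"
    using point_nonempty[OF T] point_top[OF T] unfolding dom by auto
  have dc: "\<forall>C\<in>fst ` ?P. \<forall>C'\<in>CA smc star. C' \<subseteq> C \<longrightarrow> C' \<in> fst ` ?P"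
  proof (intro ballI impI)
    fix C C' assume C: "C \<in> fst ` ?P" and C': "C' \<in> CA smc star" "C' \<subseteq> C"
    have "Spec smc C \<subseteq> {\<sigma> \<in> Spec smc C. restr C' \<sigma> \<in> Spec smc C'}"
      using restr_Spec[OF C'] by blast
    then show "C' \<in> fst ` ?P"
      using point_restr_up[OF T _ C' openin_SpecTop_Spec] C unfolding dom by blast
  qed
  have dir: "\<forall>C\<in>fst ` ?P. \<forall>C'\<in>fst ` ?P. \<exists>D\<in>fst ` ?P. C \<subseteq> D \<and> C' \<subseteq> D"
  proof (intro ballI)
    fix C C' assume "C \<in> fst ` ?P" "C' \<in> fst ` ?P"
    then obtain E w where "(E, w) \<in> \<tau>"
      "site_le smc (E, w) (C, Spec smc C)" "site_le smc (E, w) (C', Spec smc C')"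
      using point_directed[OF T] unfolding dom by force
    then show "\<exists>D\<in>fst ` ?P. C \<subseteq> D \<and> C' \<subseteq> D"
      using point_top[OF T] unfolding dom by (auto simp: site_le_def)
  qed
  have un: "\<forall>C \<sigma> \<sigma>'. (C, \<sigma>) \<in> ?P \<and> (C, \<sigma>') \<in> ?P \<longrightarrow> \<sigma> = \<sigma>'"
    using point_to_ideal_unique by blast
  have rs: "\<forall>(C, \<sigma>)\<in>?P. \<forall>(D, \<rho>)\<in>?P. C \<subseteq> D \<longrightarrow> \<sigma> = restr C \<rho>"
    using point_to_ideal_restr[OF T] by auto
  show ?thesis
    unfolding consistent_ideal_def using el ne dc dir un rs by (intro conjI)
qed

lemma ideal_to_point_point_to_ideal:
  assumes T: "is_point smc star \<tau>"
  shows "ideal_to_point smc (point_to_ideal smc star \<tau>) = \<tau>"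
proof -
  have "(C, u) \<in> ideal_to_point smc (point_to_ideal smc star \<tau>) \<longleftrightarrow> (C, u) \<in> \<tau>" for C u
  proof
    assume "(C, u) \<in> ideal_to_point smc (point_to_ideal smc star \<tau>)"
    then show "(C, u) \<in> \<tau>"
      using point_to_ideal_fiber by (force simp: ideal_to_point_def)
  next
    assume Cu: "(C, u) \<in> \<tau>"
    obtain \<sigma> where "(C, \<sigma>) \<in> point_to_ideal smc star \<tau>"
      using Domain_point_to_ideal[OF T] point_top[OF T Cu] by blast
    then show "(C, u) \<in> ideal_to_point smc (point_to_ideal smc star \<tau>)"
      using point_to_ideal_fiber Cu unfolding ideal_to_point_def by blast
  qed
  then show ?thesis by auto
qed

subsection \<open>From consistent ideals to points\<close>

lemma consistent_idealD:
  assumes "consistent_ideal smc star P"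
  shows consistent_ideal_el: "(C, \<sigma>) \<in> P \<Longrightarrow> C \<in> CA smc star \<and> \<sigma> \<in> Spec smc C"
    and consistent_ideal_nonempty: "P \<noteq> {}"
    and consistent_ideal_down_closed:
      "(D, \<rho>) \<in> P \<Longrightarrow> C \<in> CA smc star \<Longrightarrow> C \<subseteq> D \<Longrightarrow> \<exists>\<sigma>. (C, \<sigma>) \<in> P"
    and consistent_ideal_directed:
      "(C, \<sigma>) \<in> P \<Longrightarrow> (C', \<sigma>') \<in> P \<Longrightarrow> \<exists>D \<rho>. (D, \<rho>) \<in> P \<and> C \<subseteq> D \<and> C' \<subseteq> D"
    and consistent_ideal_unique: "(C, \<sigma>) \<in> P \<Longrightarrow> (C, \<sigma>') \<in> P \<Longrightarrow> \<sigma> = \<sigma>'"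
    and consistent_ideal_restr:
      "(C, \<sigma>) \<in> P \<Longrightarrow> (D, \<rho>) \<in> P \<Longrightarrow> C \<subseteq> D \<Longrightarrow> \<sigma> = restr C \<rho>"
proof -
  obtain el: "\<forall>(C, \<sigma>)\<in>P. C \<in> CA smc star \<and> \<sigma> \<in> Spec smc C"
    and ne: "fst ` P \<noteq> {}"
    and dc: "\<forall>C\<in>fst ` P. \<forall>C'\<in>CA smc star. C' \<subseteq> C \<longrightarrow> C' \<in> fst ` P"
    and dir: "\<forall>C\<in>fst ` P. \<forall>C'\<in>fst ` P. \<exists>D\<in>fst ` P. C \<subseteq> D \<and> C' \<subseteq> D"
    and un: "\<forall>C \<sigma> \<sigma>'. (C, \<sigma>) \<in> P \<and> (C, \<sigma>') \<in> P \<longrightarrow> \<sigma> = \<sigma>'"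
    and rs: "\<forall>(C, \<sigma>)\<in>P. \<forall>(D, \<rho>)\<in>P. C \<subseteq> D \<longrightarrow> \<sigma> = restr C \<rho>"
    using assms unfolding consistent_ideal_def by (elim conjE) (rule that)
  have fst_iff: "C \<in> fst ` P \<longleftrightarrow> (\<exists>\<sigma>. (C, \<sigma>) \<in> P)" for C
    by force
  show "(C, \<sigma>) \<in> P \<Longrightarrow> C \<in> CA smc star \<and> \<sigma> \<in> Spec smc C"
    using el by fast
  show "P \<noteq> {}"
    using ne by simp
  show "(D, \<rho>) \<in> P \<Longrightarrow> C \<in> CA smc star \<Longrightarrow> C \<subseteq> D \<Longrightarrow> \<exists>\<sigma>. (C, \<sigma>) \<in> P"
    using dc by (force simp: fst_iff)
  show "(C, \<sigma>) \<in> P \<Longrightarrow> (C', \<sigma>') \<in> P \<Longrightarrow> \<exists>D \<rho>. (D, \<rho>) \<in> P \<and> C \<subseteq> D \<and> C' \<subseteq> D"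
  proof -
    assume "(C, \<sigma>) \<in> P" "(C', \<sigma>') \<in> P"
    then have "C \<in> fst ` P" "C' \<in> fst ` P"
      by (auto simp: fst_iff)
    then obtain D where "D \<in> fst ` P" "C \<subseteq> D" "C' \<subseteq> D"
      using dir by meson
    then show ?thesis by (auto simp: fst_iff)
  qed
  show "(C, \<sigma>) \<in> P \<Longrightarrow> (C, \<sigma>') \<in> P \<Longrightarrow> \<sigma> = \<sigma>'"
    using un by blast
  show "(C, \<sigma>) \<in> P \<Longrightarrow> (D, \<rho>) \<in> P \<Longrightarrow> C \<subseteq> D \<Longrightarrow> \<sigma> = restr C \<rho>"
    using rs by fast
qed

lemma ideal_to_point_fiber:
  assumes P: "consistent_ideal smc star P" and C: "(C, \<sigma>) \<in> P"
  shows "(C, u) \<in> ideal_to_point smc P \<longleftrightarrow> openin (SpecTop smc C) u \<and> \<sigma> \<in> u"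
proof
  assume "(C, u) \<in> ideal_to_point smc P"
  then obtain \<sigma>' where "(C, \<sigma>') \<in> P" "openin (SpecTop smc C) u" "\<sigma>' \<in> u"
    by (auto simp: ideal_to_point_def)
  then show "openin (SpecTop smc C) u \<and> \<sigma> \<in> u"
    using consistent_ideal_unique[OF P C] by blast
next
  assume "openin (SpecTop smc C) u \<and> \<sigma> \<in> u"
  then show "(C, u) \<in> ideal_to_point smc P"
    using C by (auto simp: ideal_to_point_def)
qed

text \<open>Upward closure: if (D, v) lies above an outcome rho and (D, v) \<le> (C, u), then the outcome
  over C is the restriction of rho, which lies in u.\<close>
lemma ideal_to_point_up_closed:
  assumes P: "consistent_ideal smc star P"
    and x: "x \<in> ideal_to_point smc P" and y: "y \<in> site_el smc star" and le: "site_le smc x y"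
  shows "y \<in> ideal_to_point smc P"
proof -
  obtain D v C u where xy: "x = (D, v)" "y = (C, u)"
    by (cases x, cases y)
  obtain \<rho> where \<rho>: "(D, \<rho>) \<in> P" "\<rho> \<in> v"
    using x xy by (auto simp: ideal_to_point_def)
  have C: "C \<in> CA smc star" "openin (SpecTop smc C) u"
    using y xy by (auto simp: site_el_def)
  have sub: "C \<subseteq> D" "v \<subseteq> {\<sigma> \<in> Spec smc D. restr C \<sigma> \<in> u}"
    using le xy by (auto simp: site_le_def)
  obtain \<sigma> where \<sigma>: "(C, \<sigma>) \<in> P"
    using consistent_ideal_down_closed[OF P \<rho>(1) C(1) sub(1)] by blast
  have "\<sigma> \<in> u"
    using consistent_ideal_restr[OF P \<sigma> \<rho>(1) sub(1)] sub(2) \<rho>(2) by blast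
  then show ?thesis
    using ideal_to_point_fiber[OF P \<sigma>] C(2) xy by simp
qed

text \<open>Directedness: above two outcomes there is a common outcome rho over a larger context D,
  and the intersection of the two pulled-back opens is a neighbourhood of rho.\<close>
lemma ideal_to_point_directed:
  assumes P: "consistent_ideal smc star P"
    and x: "x \<in> ideal_to_point smc P" and y: "y \<in> ideal_to_point smc P"
  shows "\<exists>z\<in>ideal_to_point smc P. site_le smc z x \<and> site_le smc z y"
proof -
  obtain C u C' u' where xy: "x = (C, u)" "y = (C', u')"
    by (cases x, cases y)
  obtain \<sigma> \<sigma>' where \<sigma>: "(C, \<sigma>) \<in> P" "openin (SpecTop smc C) u" "\<sigma> \<in> u"
    and \<sigma>': "(C', \<sigma>') \<in> P" "openin (SpecTop smc C') u'" "\<sigma>' \<in> u'"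
    using x y xy by (auto simp: ideal_to_point_def)
  obtain D \<rho> where \<rho>: "(D, \<rho>) \<in> P" "C \<subseteq> D" "C' \<subseteq> D"
    using consistent_ideal_directed[OF P \<sigma>(1) \<sigma>'(1)] by blast
  have CA: "C \<in> CA smc star" "C' \<in> CA smc star" "\<rho> \<in> Spec smc D"
    using consistent_ideal_el[OF P] \<sigma>(1) \<sigma>'(1) \<rho>(1) by blast+
  define w where "w = {f \<in> Spec smc D. restr C f \<in> u} \<inter> {f \<in> Spec smc D. restr C' f \<in> u'}"
  have "openin (SpecTop smc D) w"
    unfolding w_def
    using openin_restr_preimage[OF CA(1) \<rho>(2) \<sigma>(2)] openin_restr_preimage[OF CA(2) \<rho>(3) \<sigma>'(2)]
    by (rule openin_Int)
  moreover have "\<rho> \<in> w"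
    unfolding w_def
    using consistent_ideal_restr[OF P \<sigma>(1) \<rho>(1,2)] consistent_ideal_restr[OF P \<sigma>'(1) \<rho>(1,3)]
      \<sigma>(3) \<sigma>'(3) CA(3) by simp
  ultimately have "(D, w) \<in> ideal_to_point smc P"
    using ideal_to_point_fiber[OF P \<rho>(1)] by blast
  moreover have "site_le smc (D, w) x" "site_le smc (D, w) y"
    using \<rho> xy unfolding site_le_def w_def by auto
  ultimately show ?thesis by blast
qed

text \<open>Complete primeness: a cover of a neighbourhood of sigma over C contains a neighbourhood
  of sigma over C.\<close>
lemma ideal_to_point_covers:
  assumes P: "consistent_ideal smc star P" and x: "x \<in> ideal_to_point smc P"
    and S: "S \<subseteq> site_el smc star" "covers x S"
  shows "S \<inter> ideal_to_point smc P \<noteq> {}"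
proof -
  obtain C u where xx: "x = (C, u)"
    by (cases x)
  obtain \<sigma> where \<sigma>: "(C, \<sigma>) \<in> P" "\<sigma> \<in> u"
    using x xx by (auto simp: ideal_to_point_def)
  obtain v where v: "(C, v) \<in> S" "\<sigma> \<in> v"
    using S(2) \<sigma>(2) xx by (auto simp: covers_def)
  then have "openin (SpecTop smc C) v"
    using S(1) by (auto simp: site_el_def)
  then have "(C, v) \<in> ideal_to_point smc P"
    using ideal_to_point_fiber[OF P \<sigma>(1)] v(2) by blast
  then show ?thesis
    using v(1) by blast
qed

lemma ideal_to_point_is_point:
  assumes P: "consistent_ideal smc star P"
  shows "is_point smc star (ideal_to_point smc P)"
proof -
  have el: "ideal_to_point smc P \<subseteq> site_el smc star"
    using consistent_ideal_el[OF P] by (auto simp: ideal_to_point_def site_el_def)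
  have ne: "ideal_to_point smc P \<noteq> {}"
  proof -
    obtain C \<sigma> where \<sigma>: "(C, \<sigma>) \<in> P"
      using consistent_ideal_nonempty[OF P] by force
    then have "(C, Spec smc C) \<in> ideal_to_point smc P"
      using ideal_to_point_fiber[OF P \<sigma>] consistent_ideal_el[OF P \<sigma>] openin_SpecTop_Spec by blast
    then show ?thesis by blast
  qed
  have up: "\<forall>x\<in>ideal_to_point smc P. \<forall>y\<in>site_el smc star. site_le smc x y \<longrightarrow>
      y \<in> ideal_to_point smc P"
    using ideal_to_point_up_closed[OF P] by blast
  have dir: "\<forall>x\<in>ideal_to_point smc P. \<forall>y\<in>ideal_to_point smc P.
      \<exists>z\<in>ideal_to_point smc P. site_le smc z x \<and> site_le smc z y"
    using ideal_to_point_directed[OF P] by blast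
  have prime: "\<forall>x\<in>ideal_to_point smc P. \<forall>S. S \<subseteq> site_el smc star \<and> covers x S \<longrightarrow>
      S \<inter> ideal_to_point smc P \<noteq> {}"
    using ideal_to_point_covers[OF P] by blast
  show ?thesis
    unfolding is_point_def using el ne up dir prime by (intro conjI)
qed

lemma point_to_ideal_ideal_to_point:
  assumes P: "consistent_ideal smc star P"
  shows "point_to_ideal smc star (ideal_to_point smc P) = P"
proof -
  let ?Q = "ideal_to_point smc P"
  have "(C, \<sigma>) \<in> point_to_ideal smc star ?Q \<longleftrightarrow> (C, \<sigma>) \<in> P" for C \<sigma>
  proof
    assume C: "(C, \<sigma>) \<in> point_to_ideal smc star ?Q"
    then obtain \<sigma>' where \<sigma>': "(C, \<sigma>') \<in> P"
      by (auto simp: point_to_ideal_def ideal_to_point_def)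
    have "\<sigma>' = \<sigma>"
    proof (rule SpecTop_eq_by_nbhds)
      show "\<sigma>' \<in> Spec smc C" "\<sigma> \<in> Spec smc C"
        using consistent_ideal_el[OF P \<sigma>'] C by (auto simp: point_to_ideal_def)
      fix u assume "openin (SpecTop smc C) u" "\<sigma> \<in> u"
      then show "\<sigma>' \<in> u"
        using point_to_ideal_fiber[OF C] ideal_to_point_fiber[OF P \<sigma>'] by blast
    qed
    with \<sigma>' show "(C, \<sigma>) \<in> P" by simp
  next
    assume \<sigma>: "(C, \<sigma>) \<in> P"
    then show "(C, \<sigma>) \<in> point_to_ideal smc star ?Q"
      using ideal_to_point_fiber[OF P \<sigma>] consistent_ideal_el[OF P \<sigma>] openin_SpecTop_Spec
      by (auto simp: point_to_ideal_def)
  qed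
  then show ?thesis by auto
qed

theorem theorem4p3:
  fixes smc :: "complex \<Rightarrow> 'a::{real_normed_algebra,ring_1,banach} \<Rightarrow> 'a"
    and star :: "'a \<Rightarrow> 'a"
  assumes "cstar_alg smc star"
  shows "(\<forall>\<tau>. is_point smc star \<tau> \<longrightarrow>
            (\<forall>C\<in>CA smc star. (C, Spec smc C) \<in> \<tau> \<longrightarrow>
               (\<exists>!\<sigma>. \<sigma> \<in> Spec smc C \<and>
                   {u. (C, u) \<in> \<tau>} = {u. openin (SpecTop smc C) u \<and> \<sigma> \<in> u})))
       \<and> bij_betw (point_to_ideal smc star)
           {\<tau>. is_point smc star \<tau>} {P. consistent_ideal smc star P}
       \<and> (\<forall>P. consistent_ideal smc star P \<longrightarrow>
            is_point smc star (ideal_to_point smc P) \<and>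
            point_to_ideal smc star (ideal_to_point smc P) = P)"
proof (intro conjI allI impI ballI)
  fix \<tau> C assume "is_point smc star \<tau>" "(C, Spec smc C) \<in> \<tau>"
  then show "\<exists>!\<sigma>. \<sigma> \<in> Spec smc C \<and>
               {u. (C, u) \<in> \<tau>} = {u. openin (SpecTop smc C) u \<and> \<sigma> \<in> u}"
    by (rule point_fiber_nbhds)
next
  show "bij_betw (point_to_ideal smc star) {\<tau>. is_point smc star \<tau>} {P. consistent_ideal smc star P}"
    by (rule bij_betw_byWitness[where f' = "ideal_to_point smc"])
      (auto simp: ideal_to_point_point_to_ideal point_to_ideal_ideal_to_point
        point_to_ideal_consistent ideal_to_point_is_point)
qed (simp_all add: ideal_to_point_is_point point_to_ideal_ideal_to_point)

end
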